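(* For $i\ge0$ let $P_i(x)=\frac1{i+1}\mathrm{Tr}(x^{i+1})$ on $\mathfrak{gl}_n(\mathbb C)$ and for $\lambda\in\mathbb C$ let $\phi_\lambda(x,y)=\lambda x-y$. Then: (1) for all $i,j\ge0$ and $\lambda,\gamma\in\mathbb C$, $\{P_i\circ\phi_\lambda,P_j\circ\phi_\gamma\}^Q_{\mathcal R}=0$; (2) the Hamiltonian vector field $X^Q_{P_i\circ\phi_\lambda}$, defined by $X^Q_{P_i\circ\phi_\lambda}[K]=\{K,P_i\circ\phi_\lambda\}^Q_{\mathcal R}$, is given at $(x,y)$ by $$X^Q_{P_i\circ\phi_\lambda}(x,y)=-\big[(x,y),\big((R-I)(\lambda x-y)^{i+1},\,(R+I)(\lambda x-y)^{i+1}\big)\big].$$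
   Context: Let $P_+$ be the projection of $\mathfrak{gl}_n(\mathbb C)$ onto the upper triangular matrices (including the diagonal) and $P_-$ onto the strictly lower triangular matrices, $R=P_+-P_-$, and $\mathcal R(x,y)=(R(x-y)+y,R(x-y)+x)$ on $\mathfrak{gl}_n(\mathbb C)\times\mathfrak{gl}_n(\mathbb C)$, which carries the componentwise matrix product and commutator and the form $\langle(x,y),(x',y')\rangle_2=\mathrm{Tr}(xx')-\mathrm{Tr}(yy')$. The quadratic Poisson $\mathcal R$-bracket is $\{F,G\}^Q_{\mathcal R}(X)=\tfrac12\langle[X,\nabla_XF],\mathcal R(X\nabla_XG+\nabla_XG\,X)\rangle_2-\tfrac12\langle[X,\nabla_XG],\mathcal R(X\nabla_XF+\nabla_XF\,X)\rangle_2$ for $X=(x,y)$, gradients w.r.t. $\langle\cdot,\cdot\rangle_2$. A vector field is identified with a $\mathfrak{gl}_n\times\mathfrak{gl}_n$-valued function via $X[K]=\langle X,\nabla K\rangle_2$. *)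

theory Defs
  imports "HOL-Analysis.Analysis"
begin

text \<open>n x n complex matrices, n = CARD('n); the index type is linearly ordered so that
  upper/lower triangular parts make sense.\<close>
type_synonym 'n sqm = "complex^'n^'n"

definition cscale :: "complex \<Rightarrow> complex^'n^'n \<Rightarrow> complex^'n^'n" (infixr "*c" 75) where
  "c *c x = (\<chi> i j. c * x$i$j)"

fun mpow :: "complex^'n^'n \<Rightarrow> nat \<Rightarrow> complex^'n^'n" where
  "mpow x 0 = mat 1"
| "mpow x (Suc k) = x ** mpow x k"

definition Pplus :: "('n::{finite,linorder}) sqm \<Rightarrow> 'n sqm" where
  "Pplus x = (\<chi> i j. if i \<le> j then x$i$j else 0)"

definition Pminus :: "('n::{finite,linorder}) sqm \<Rightarrow> 'n sqm" where
  "Pminus x = (\<chi> i j. if j < i then x$i$j else 0)"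

definition Rop :: "('n::{finite,linorder}) sqm \<Rightarrow> 'n sqm" where
  "Rop x = Pplus x - Pminus x"

definition calR :: "'n::{finite,linorder} sqm \<times> 'n sqm \<Rightarrow> 'n sqm \<times> 'n sqm" where
  "calR X = (case X of (x, y) \<Rightarrow> (Rop (x - y) + y, Rop (x - y) + x))"

definition pmul :: "'n::finite sqm \<times> 'n sqm \<Rightarrow> 'n sqm \<times> 'n sqm \<Rightarrow> 'n sqm \<times> 'n sqm" where
  "pmul X Y = (fst X ** fst Y, snd X ** snd Y)"

definition pcomm :: "'n::finite sqm \<times> 'n sqm \<Rightarrow> 'n sqm \<times> 'n sqm \<Rightarrow> 'n sqm \<times> 'n sqm" where
  "pcomm X Y = pmul X Y - pmul Y X"

definition form2 :: "'n::finite sqm \<times> 'n sqm \<Rightarrow> 'n sqm \<times> 'n sqm \<Rightarrow> complex" where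
  "form2 X Y = trace (fst X ** fst Y) - trace (snd X ** snd Y)"

definition has_grad :: "('n::finite sqm \<times> 'n sqm \<Rightarrow> complex) \<Rightarrow> 'n sqm \<times> 'n sqm \<Rightarrow> 'n sqm \<times> 'n sqm \<Rightarrow> bool" where
  "has_grad F G X \<longleftrightarrow> (F has_derivative (\<lambda>V. form2 G V)) (at X)"

definition grad :: "('n::finite sqm \<times> 'n sqm \<Rightarrow> complex) \<Rightarrow> 'n sqm \<times> 'n sqm \<Rightarrow> 'n sqm \<times> 'n sqm" where
  "grad F X = (THE G. has_grad F G X)"

definition qbr :: "('n::{finite,linorder} sqm \<times> 'n sqm \<Rightarrow> complex) \<Rightarrow> ('n sqm \<times> 'n sqm \<Rightarrow> complex)
    \<Rightarrow> 'n sqm \<times> 'n sqm \<Rightarrow> complex" where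
  "qbr F G X =
     1/2 * form2 (pcomm X (grad F X)) (calR (pmul X (grad G X) + pmul (grad G X) X))
   - 1/2 * form2 (pcomm X (grad G X)) (calR (pmul X (grad F X) + pmul (grad F X) X))"

definition Pfun :: "nat \<Rightarrow> 'n::finite sqm \<Rightarrow> complex" where
  "Pfun i x = trace (mpow x (i + 1)) / of_nat (i + 1)"

definition phi :: "complex \<Rightarrow> 'n::finite sqm \<times> 'n sqm \<Rightarrow> 'n sqm" where
  "phi l X = l *c fst X - snd X"

end

theory Submission
  imports Defs
begin

(* Proposition 3.13.  Write z = lam x - y and m = z^(i+1).  The proof rests on three facts.
   (a) The gradient of P_i \<circ> phi_lam at X = (x, y) is (lam z^i, z^i)  [derivative of
       Tr(t^(i+1)) and nondegeneracy of <_,_>_2].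
   (b) Since lam x = z + y and z^i commutes with z, the bracket [X, \<nabla>F] is the diagonal
       element (c, c), c = [y, z^i], and the anticommutator X \<nabla>F + \<nabla>F X is (m + m + w, w),
       w = y z^i + z^i y.
   (c) <_,_>_2 is ad-invariant, anticommutators are self-adjoint, and <(c, c), calR V> = -<(c, c), V>.
   Part (1) then reduces to the vanishing of Tr([y, z^i] u^k) with u = gam x - y; part (2)
   reduces the bracket to <\<nabla>K, 1/2 ([calR W, X] + {(c, c), X})> and a noncommutative
   computation identifies the right-hand element with [((R - I) m, (R + I) m), X]. *)

lemma matrix_diff_ldistrib: "(A::'a::ring_1^'n^'m) ** (B - C) = A ** B - A ** C"
  by (simp add: matrix_matrix_mult_def vec_eq_iff sum_subtractf algebra_simps)

lemma matrix_diff_rdistrib: "((B::'a::ring_1^'n^'m) - C) ** A = B ** A - C ** A"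
  by (simp add: matrix_matrix_mult_def vec_eq_iff sum_subtractf algebra_simps)

lemma matrix_add_rdistrib: "((B::'a::ring_1^'n^'m) + C) ** A = B ** A + C ** A"
  by (simp add: matrix_matrix_mult_def vec_eq_iff sum.distrib algebra_simps)

lemma matrix_neg_left: "(- (B::'a::ring_1^'n^'m)) ** A = - (B ** A)"
  by (simp add: matrix_matrix_mult_def vec_eq_iff sum_negf)

lemma matrix_neg_right: "(A::'a::ring_1^'n^'m) ** (- B) = - (A ** B)"
  by (simp add: matrix_matrix_mult_def vec_eq_iff sum_negf)

lemma cscale_mult_left: "(c *c A) ** B = c *c (A ** B)"
  by (simp add: cscale_def matrix_matrix_mult_def vec_eq_iff sum_distrib_left mult.assoc)

lemma cscale_mult_right: "A ** (c *c B) = c *c (A ** B)"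
  by (simp add: cscale_def matrix_matrix_mult_def vec_eq_iff sum_distrib_left algebra_simps)

lemma trace_neg: "trace (- (A::'a::comm_ring_1^'n^'n)) = - trace A"
  by (simp add: trace_def sum_negf)

lemma trace_cscale: "trace (c *c A) = c * trace A"
  by (simp add: trace_def cscale_def sum_distrib_left)

(* Simp writes A + A as A * 2 (componentwise product); these let such terms pass through **. *)
lemma matrix_numeral_mult_left: "((A::complex^'n^'n) * numeral k) ** B = (A ** B) * numeral k"
  by (simp add: matrix_matrix_mult_def vec_eq_iff sum_distrib_left sum_distrib_right algebra_simps)

lemma matrix_numeral_mult_right: "(A::complex^'n^'n) ** (B * numeral k) = (A ** B) * numeral k"
  by (simp add: matrix_matrix_mult_def vec_eq_iff sum_distrib_left sum_distrib_right algebra_simps)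

lemmas matrix_numeral_simps = matrix_numeral_mult_left matrix_numeral_mult_right

lemmas matrix_ring_simps = matrix_add_ldistrib matrix_add_rdistrib matrix_diff_ldistrib
  matrix_diff_rdistrib matrix_neg_left matrix_neg_right matrix_mul_assoc
  cscale_mult_left cscale_mult_right trace_add trace_sub trace_neg trace_cscale

lemma mpow_add: "mpow x (i + k) = mpow x i ** mpow x k"
  by (induction i) (auto simp: matrix_mul_assoc)

lemma commute_mpow: "A ** x = x ** A \<Longrightarrow> A ** mpow x k = mpow x k ** A"
proof (induction k)
  case (Suc k)
  have "A ** (x ** mpow x k) = x ** (A ** mpow x k)"
    using Suc.prems by (metis matrix_mul_assoc)
  also have "\<dots> = (x ** mpow x k) ** A"
    using Suc by (simp add: matrix_mul_assoc)
  finally show ?case by simp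
qed simp

lemma mpow_commute: "x ** mpow x k = mpow x k ** x"
  by (rule commute_mpow) (rule refl)

lemma matrix_mult_scaleR_left: "(r *\<^sub>R (A::complex^'n^'m)) ** (B::complex^'k^'n) = r *\<^sub>R (A ** B)"
  by (simp add: matrix_matrix_mult_def vec_eq_iff scaleR_sum_right)

lemma matrix_mult_scaleR_right: "(A::complex^'n^'m) ** (r *\<^sub>R (B::complex^'k^'n)) = r *\<^sub>R (A ** B)"
  by (simp add: matrix_matrix_mult_def vec_eq_iff scaleR_sum_right)

lemma bounded_bilinear_matrix_mult:
  "bounded_bilinear (\<lambda>(A::complex^'n^'n) (B::complex^'n^'n). A ** B)"
  unfolding bilinear_conv_bounded_bilinear[symmetric] bilinear_def
  by (auto intro!: linearI simp: matrix_add_ldistrib matrix_add_rdistrib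
      matrix_mult_scaleR_left matrix_mult_scaleR_right)

lemma bounded_linear_trace: "bounded_linear (trace :: complex^'n^'n \<Rightarrow> complex)"
  unfolding linear_conv_bounded_linear[symmetric]
  by (rule linearI) (auto simp: trace_def scaleR_sum_right sum.distrib)

lemma bounded_linear_phi: "bounded_linear (phi lam :: 'n::finite sqm \<times> 'n sqm \<Rightarrow> 'n sqm)"
  unfolding linear_conv_bounded_linear[symmetric]
  by (rule linearI) (auto simp: phi_def cscale_def vec_eq_iff algebra_simps scaleR_conv_of_real)

fun dmpow :: "'n::finite sqm \<Rightarrow> nat \<Rightarrow> 'n sqm \<Rightarrow> 'n sqm" where
  "dmpow x 0 V = 0"
| "dmpow x (Suc k) V = V ** mpow x k + x ** dmpow x k V"

lemma mpow_has_derivative: "((\<lambda>x. mpow x k) has_derivative dmpow x k) (at x)"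
proof (induction k)
  case 0
  show ?case by (simp add: fun_eq_iff)
next
  case (Suc k)
  have "((\<lambda>x. x ** mpow x k) has_derivative (\<lambda>V. x ** dmpow x k V + V ** mpow x k)) (at x)"
    by (rule bounded_bilinear.FDERIV[OF bounded_bilinear_matrix_mult has_derivative_ident Suc])
  then show ?case
    by (simp add: add.commute)
qed

(* Under the trace the Leibniz expansion collapses: d Tr(x^(k+1)) V = (k+1) Tr(x^k V).
   The commuting factor A is carried along only to make the induction go through. *)
lemma trace_dmpow:
  assumes "A ** x = x ** A"
  shows "trace (A ** dmpow x (Suc k) V) = of_nat (Suc k) * trace (A ** mpow x k ** V)"
  using assms
proof (induction k arbitrary: A)
  case (Suc k)
  have "(A ** x) ** x = x ** (A ** x)"
    using Suc.prems by (metis matrix_mul_assoc)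
  from Suc.IH[OF this]
  have "trace (A ** (x ** dmpow x (Suc k) V)) = of_nat (Suc k) * trace (A ** mpow x (Suc k) ** V)"
    by (simp add: matrix_mul_assoc)
  moreover have "trace (A ** (V ** mpow x (Suc k))) = trace (A ** mpow x (Suc k) ** V)"
    by (metis matrix_mul_assoc trace_mul_sym commute_mpow[OF Suc.prems])
  ultimately show ?case
    by (simp add: matrix_add_ldistrib trace_add algebra_simps)
qed simp

(* The form <_,_>_2 is nondegenerate (test against matrix units), so gradients are unique. *)
definition matrix_unit :: "'n::finite \<Rightarrow> 'n \<Rightarrow> complex^'n^'n" where
  "matrix_unit p q = (\<chi> k l. if k = q \<and> l = p then 1 else 0)"

lemma trace_mult_matrix_unit: "trace (a ** matrix_unit p q) = a$p$q"
proof -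
  have "trace (a ** matrix_unit p q)
      = (\<Sum>i\<in>UNIV. if i = p then (\<Sum>k\<in>UNIV. if k = q then a$i$k else 0) else 0)"
    unfolding trace_def matrix_matrix_mult_def matrix_unit_def
    by (intro sum.cong refl) (simp add: if_distrib[of "\<lambda>t. _ * t"] cong: if_cong)
  then show ?thesis by simp
qed

lemma form2_nondegenerate:
  assumes "\<And>V. form2 G V = form2 G' V"
  shows "G = G'"
proof -
  obtain a b a' b' where G: "G = (a, b)" and G': "G' = (a', b')" by fastforce
  have "a$p$q = a'$p$q" for p q
    using assms[of "(matrix_unit p q, 0)"] by (simp add: G G' form2_def trace_mult_matrix_unit)
  moreover have "b$p$q = b'$p$q" for p q
    using assms[of "(0, matrix_unit p q)"] by (simp add: G G' form2_def trace_mult_matrix_unit)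
  ultimately show ?thesis by (simp add: G G' vec_eq_iff)
qed

lemma grad_eqI: "has_grad F G X \<Longrightarrow> grad F X = G"
  unfolding grad_def
proof (rule the_equality)
  fix G' assume "has_grad F G X" "has_grad F G' X"
  then have "form2 G = form2 G'"
    unfolding has_grad_def by (rule has_derivative_unique)
  then show "G' = G" by (metis form2_nondegenerate)
qed

lemma grad_Pfun_phi:
  "grad (Pfun i \<circ> phi lam) X = (lam *c mpow (phi lam X) i, mpow (phi lam X) i)"
proof (rule grad_eqI)
  define z where "z = phi lam X"
  have "bounded_linear (\<lambda>t::complex^'n^'n. trace t / of_nat (i + 1))"
    using bounded_linear_divide bounded_linear_trace bounded_linear_compose by blast
  moreover have "((\<lambda>X. mpow (phi lam X) (i + 1)) has_derivative (\<lambda>V. dmpow z (i + 1) (phi lam V))) (at X)"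
    unfolding z_def
    by (rule has_derivative_compose[OF bounded_linear.has_derivative[OF bounded_linear_phi
          has_derivative_ident] mpow_has_derivative, unfolded o_def])
  ultimately have "((Pfun i \<circ> phi lam) has_derivative
        (\<lambda>V. trace (dmpow z (i + 1) (phi lam V)) / of_nat (i + 1))) (at X)"
    by (auto dest: bounded_linear.has_derivative simp: Pfun_def o_def)
  moreover have "trace (dmpow z (i + 1) (phi lam V)) / of_nat (i + 1)
      = form2 (lam *c mpow z i, mpow z i) V" for V
    using trace_dmpow[of "mat 1" z i "phi lam V"]
    by (simp add: form2_def phi_def matrix_ring_simps del: of_nat_Suc)
  ultimately show "has_grad (Pfun i \<circ> phi lam) (lam *c mpow z i, mpow z i) X"
    unfolding has_grad_def by simp
qed

lemma trace_cyclic3: "trace (a ** b ** c) = trace (b ** c ** (a::complex^'n^'n))"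
  by (simp only: matrix_mul_assoc[symmetric] trace_mul_sym[of a])

lemma trace_commutator:
  fixes x a b :: "complex^'n^'n"
  shows "trace ((x ** a - a ** x) ** b) = trace (a ** (b ** x - x ** b))"
proof -
  have "trace (x ** a ** b) = trace (a ** (b ** x))"
    using trace_cyclic3[of x a b] by (simp only: matrix_mul_assoc)
  then show ?thesis by (simp add: matrix_ring_simps)
qed

lemma trace_anticommutator:
  fixes x a c :: "complex^'n^'n"
  shows "trace (c ** (x ** a + a ** x)) = trace (a ** (c ** x + x ** c))"
proof -
  have "trace (c ** x ** a) = trace (a ** c ** x)" and "trace (c ** a ** x) = trace (a ** x ** c)"
    using trace_cyclic3[of a c x] trace_cyclic3[of c a x] by simp_all
  then show ?thesis by (simp add: matrix_ring_simps)
qed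

lemma form2_sym: "form2 A B = form2 B A"
  unfolding form2_def by (simp only: trace_mul_sym[of "fst A"] trace_mul_sym[of "snd A"])

lemma form2_add_right: "form2 A (B + C) = form2 A B + form2 A C"
  by (simp add: form2_def matrix_add_ldistrib trace_add)

lemma form2_pcomm: "form2 (pcomm X A) B = form2 A (pcomm B X)"
  by (simp add: form2_def pcomm_def pmul_def trace_commutator)

lemma form2_anticomm: "form2 D (pmul X A + pmul A X) = form2 A (pmul D X + pmul X D)"
  by (simp add: form2_def pmul_def trace_anticommutator)

lemma form2_diag_calR: "form2 (c, c) (calR V) = - form2 (c, c) V"
  by (cases V) (simp add: calR_def form2_def matrix_ring_simps)

lemma form2_diag_shift: "form2 (c, c) (P + Q, Q) = trace (c ** P)"
  by (simp add: form2_def matrix_ring_simps)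

lemma pcomm_antisym: "- pcomm X A = pcomm A X"
  by (simp add: pcomm_def)

lemma cscale_scalar_swap: "A ** (c *c B) = (c *c A) ** B"
  by (simp add: cscale_mult_left cscale_mult_right)

lemma pcomm_at_grad:
  assumes "z ** p = p ** z" and "lam *c x = z + y"
  shows "pcomm (x, y) (lam *c p, p) = (y ** p - p ** y, y ** p - p ** y)"
proof -
  have "x ** (lam *c p) - (lam *c p) ** x = (z + y) ** p - p ** (z + y)"
    using cscale_scalar_swap[of x lam p] cscale_scalar_swap[of p lam x] assms(2) by simp
  then show ?thesis
    using assms(1) by (simp add: pcomm_def pmul_def matrix_ring_simps)
qed

lemma anticomm_at_grad:
  assumes "z ** p = p ** z" and "lam *c x = z + y"
  shows "pmul (x, y) (lam *c p, p) + pmul (lam *c p, p) (x, y)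
       = (z ** p + z ** p + (y ** p + p ** y), y ** p + p ** y)"
proof -
  have "x ** (lam *c p) + (lam *c p) ** x = (z + y) ** p + p ** (z + y)"
    using cscale_scalar_swap[of x lam p] cscale_scalar_swap[of p lam x] assms(2) by simp
  then show ?thesis
    using assms(1) by (simp add: pmul_def matrix_ring_simps)
qed

(* Since the two components of the anticommutator above differ by m + m, calR acts on it
   through Rop m alone. *)
lemma Rop_add: "Rop (A + B) = Rop A + Rop B"
  by (simp add: Rop_def Pplus_def Pminus_def vec_eq_iff)

lemma calR_shift: "calR (m + m + w, w) = (Rop m + Rop m + w, Rop m + Rop m + (m + m + w))"
  by (simp only: calR_def prod.case add_diff_cancel_right' Rop_add)

lemma commutator_cancel_y:
  fixes y p :: "complex^'n^'n"
  defines "w \<equiv> y ** p + p ** y" and "c \<equiv> y ** p - p ** y"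
  shows "(w ** y - y ** w) + (c ** y + y ** c) = 0"
  unfolding w_def c_def by (simp add: matrix_ring_simps)

lemma commutator_cancel_x:
  fixes x y z p :: "complex^'n^'n"
  assumes "z ** p = p ** z" and "lam *c x = z + y"
  defines "w \<equiv> y ** p + p ** y" and "c \<equiv> y ** p - p ** y"
  shows "(w ** x - x ** w) + (c ** x + x ** c) = (x ** (z ** p) - z ** p ** x) + (x ** (z ** p) - z ** p ** x)"
proof -
  have y: "y = lam *c x - z"
    using assms(2) by (simp add: algebra_simps)
  have "(w ** x - x ** w) + (c ** x + x ** c) = (y ** p ** x - x ** p ** y) + (y ** p ** x - x ** p ** y)"
    unfolding w_def c_def by (simp add: matrix_ring_simps)
  also have "y ** p ** x - x ** p ** y = x ** (p ** z) - z ** p ** x"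
    unfolding y by (simp add: matrix_ring_simps)
  finally show ?thesis
    using assms(1) by simp
qed

(* Assembled in pairs: [calR(X \<nabla>F + \<nabla>F X), X] + {(c, c), X} = 2 [(r - m, r + m), X];
   r is arbitrary here and is taken to be R m, the value produced by calR_shift. *)
lemma bracket_identity:
  fixes x y z p r :: "complex^'n^'n"
  assumes "z ** p = p ** z" and "lam *c x = z + y"
  defines "m \<equiv> z ** p" and "w \<equiv> y ** p + p ** y" and "c \<equiv> y ** p - p ** y"
  shows "pcomm (r + r + w, r + r + (m + m + w)) (x, y) + (pmul (c, c) (x, y) + pmul (x, y) (c, c))
       = pcomm (r - m, r + m) (x, y) + pcomm (r - m, r + m) (x, y)"
proof -
  have cancel_x: "(w ** x - x ** w) + (c ** x + x ** c) = (x ** m - m ** x) + (x ** m - m ** x)"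
    unfolding w_def c_def m_def by (rule commutator_cancel_x[OF assms(1,2)])
  have cancel_y: "(w ** y - y ** w) + (c ** y + y ** c) = 0"
    unfolding w_def c_def by (rule commutator_cancel_y)
  have "(r + r + w) ** x - x ** (r + r + w) + (c ** x + x ** c)
      = (r ** x - x ** r) + (r ** x - x ** r) + ((w ** x - x ** w) + (c ** x + x ** c))"
    by (simp add: matrix_ring_simps matrix_numeral_simps algebra_simps)
  also have "\<dots> = ((r - m) ** x - x ** (r - m)) + ((r - m) ** x - x ** (r - m))"
    unfolding cancel_x by (simp add: matrix_ring_simps matrix_numeral_simps algebra_simps)
  finally have fst_eq: "(r + r + w) ** x - x ** (r + r + w) + (c ** x + x ** c)
      = ((r - m) ** x - x ** (r - m)) + ((r - m) ** x - x ** (r - m))" .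
  have "(r + r + (m + m + w)) ** y - y ** (r + r + (m + m + w)) + (c ** y + y ** c)
      = ((r + m) ** y - y ** (r + m)) + ((r + m) ** y - y ** (r + m))
        + ((w ** y - y ** w) + (c ** y + y ** c))"
    by (simp add: matrix_ring_simps matrix_numeral_simps algebra_simps)
  then have snd_eq: "(r + r + (m + m + w)) ** y - y ** (r + r + (m + m + w)) + (c ** y + y ** c)
      = ((r + m) ** y - y ** (r + m)) + ((r + m) ** y - y ** (r + m))"
    unfolding cancel_y by simp
  show ?thesis
    using fst_eq snd_eq by (simp add: pcomm_def pmul_def)
qed

lemma trace_commuting_commutator:
  fixes a p q :: "complex^'n^'n"
  assumes "a ** p = p ** a"
  shows "trace (a ** (p ** q - q ** p)) = 0"
proof -
  have "trace (a ** q ** p) = trace (p ** a ** q)"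
    by (rule trace_cyclic3[symmetric])
  then show ?thesis
    using assms by (simp add: matrix_ring_simps)
qed

(* Key trace identity of part (1): with z = lam x - y and u = gam x - y,
   Tr([y, z^i] u^k) = Tr(y [z^i, u^k]) = 0, since y is a combination of z and u (or z = u)
   and [z^i, u^k] is trace-orthogonal to both z and u. *)
lemma trace_commutator_powers_vanish:
  assumes "lam *c x = z + y" and "gam *c x = u + y"
  shows "trace ((y ** mpow z i - mpow z i ** y) ** mpow u k) = 0"
proof -
  define p q where "p = mpow z i" and "q = mpow u k"
  have "trace (p ** y ** q) = trace (y ** q ** p)"
    by (rule trace_cyclic3)
  then have reduce: "trace ((y ** p - p ** y) ** q) = trace (y ** (p ** q - q ** p))"
    by (simp add: matrix_ring_simps)
  have tz: "trace (z ** (p ** q - q ** p)) = 0"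
    unfolding p_def by (rule trace_commuting_commutator[OF mpow_commute])
  have "trace (u ** (q ** p - p ** q)) = 0"
    unfolding q_def by (rule trace_commuting_commutator[OF mpow_commute])
  then have tu: "trace (u ** (p ** q - q ** p)) = 0"
    by (metis minus_diff_eq matrix_neg_right trace_neg neg_equal_0_iff_equal)
  have "trace (y ** (p ** q - q ** p)) = 0"
  proof (cases "lam = gam")
    case True
    then have "z = u"
      using assms by (metis add_right_cancel add.commute)
    then have "p ** q = q ** p"
      unfolding p_def q_def by (metis mpow_add add.commute)
    then show ?thesis
      by (simp add: trace_def matrix_matrix_mult_def)
  next
    case False
    have z: "z = lam *c x - y" and u: "u = gam *c x - y"
      using assms by (simp_all add: algebra_simps)
    have "(gam - lam) *c y = lam *c u - gam *c z"
      unfolding z u by (simp add: cscale_def vec_eq_iff algebra_simps)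
    then have "(gam - lam) * trace (y ** (p ** q - q ** p))
        = trace ((lam *c u - gam *c z) ** (p ** q - q ** p))"
      by (simp only: trace_cscale[symmetric] cscale_mult_left[symmetric])
    also have "\<dots> = lam * trace (u ** (p ** q - q ** p)) - gam * trace (z ** (p ** q - q ** p))"
      by (simp only: matrix_diff_rdistrib trace_sub cscale_mult_left trace_cscale)
    finally show ?thesis
      using tz tu False by simp
  qed
  then show ?thesis
    unfolding p_def q_def reduce[unfolded p_def q_def] .
qed

(* Each of the two terms of {P_i \<circ> phi_lam, P_j \<circ> phi_gam} vanishes separately. *)
lemma form2_bracket_of_grads_vanish:
  assumes "lam *c x = z + y" and "gam *c x = u + y"
  shows "form2 (pcomm (x, y) (lam *c mpow z i, mpow z i))
            (calR (pmul (x, y) (gam *c mpow u j, mpow u j) + pmul (gam *c mpow u j, mpow u j) (x, y))) = 0"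
proof -
  have "form2 (pcomm (x, y) (lam *c mpow z i, mpow z i))
            (calR (pmul (x, y) (gam *c mpow u j, mpow u j) + pmul (gam *c mpow u j, mpow u j) (x, y)))
      = - trace ((y ** mpow z i - mpow z i ** y) ** (mpow u (Suc j) + mpow u (Suc j)))"
    by (simp only: pcomm_at_grad[OF mpow_commute assms(1)] anticomm_at_grad[OF mpow_commute assms(2)]
        form2_diag_calR form2_diag_shift mpow.simps)
  also have "\<dots> = 0"
    using trace_commutator_powers_vanish[OF assms, of i "Suc j"]
    by (simp only: matrix_add_ldistrib trace_add) simp
  finally show ?thesis .
qed

lemma Pfun_phi_involutive:
  "qbr (Pfun i \<circ> phi lam) (Pfun j \<circ> phi gam) X = 0"
proof -
  obtain x y where X: "X = (x, y)"
    by fastforce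
  define z u where "z = lam *c x - y" and "u = gam *c x - y"
  have "lam *c x = z + y" and "gam *c x = u + y"
    by (simp_all add: z_def u_def)
  moreover have "grad (Pfun i \<circ> phi lam) (x, y) = (lam *c mpow z i, mpow z i)"
    and "grad (Pfun j \<circ> phi gam) (x, y) = (gam *c mpow u j, mpow u j)"
    by (simp_all add: grad_Pfun_phi phi_def z_def u_def)
  ultimately show ?thesis
    unfolding X by (simp add: qbr_def form2_bracket_of_grads_vanish)
qed

(* Part (2): the Hamiltonian vector field of P_i \<circ> phi_lam.  The identity holds for every
   K; differentiability of K is only needed for grad K to be the actual gradient. *)
lemma hamiltonian_vector_field_Pfun_phi:
  fixes x y :: "'n::{finite,linorder} sqm" and lam :: complex and i :: nat
  defines "m \<equiv> mpow (lam *c x - y) (i + 1)"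
  shows "qbr K (Pfun i \<circ> phi lam) (x, y)
       = form2 (- pcomm (x, y) (Rop m - m, Rop m + m)) (grad K (x, y))"
proof -
  define z p A where "z = lam *c x - y" and "p = mpow z i" and "A = grad K (x, y)"
  define w c where "w = y ** p + p ** y" and "c = y ** p - p ** y"
  define T where "T = pcomm (Rop m - m, Rop m + m) (x, y)"
  have zp: "z ** p = p ** z" and lam_x: "lam *c x = z + y" and m: "m = z ** p"
    by (simp_all add: p_def z_def m_def mpow_commute)
  have bracket: "pcomm (calR (m + m + w, w)) (x, y) + (pmul (c, c) (x, y) + pmul (x, y) (c, c)) = T + T"
    unfolding calR_shift T_def m w_def c_def by (rule bracket_identity[OF zp lam_x])
  have grad_F: "grad (Pfun i \<circ> phi lam) (x, y) = (lam *c p, p)"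
    by (simp add: grad_Pfun_phi phi_def z_def p_def)
  have "qbr K (Pfun i \<circ> phi lam) (x, y)
      = 1/2 * form2 (pcomm (x, y) A) (calR (m + m + w, w)) - 1/2 * form2 (c, c) (calR (pmul (x, y) A + pmul A (x, y)))"
    unfolding qbr_def grad_F A_def[symmetric] pcomm_at_grad[OF zp lam_x] anticomm_at_grad[OF zp lam_x]
    by (simp add: m w_def c_def)
  also have "\<dots> = 1/2 * form2 A (pcomm (calR (m + m + w, w)) (x, y) + (pmul (c, c) (x, y) + pmul (x, y) (c, c)))"
    unfolding form2_pcomm form2_diag_calR form2_anticomm[of "(c, c)" "(x, y)" A]
    unfolding form2_add_right by (simp add: algebra_simps)
  also have "\<dots> = 1/2 * form2 A (T + T)"
    by (simp only: bracket)
  also have "\<dots> = form2 (- pcomm (x, y) (Rop m - m, Rop m + m)) A"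
    unfolding form2_add_right pcomm_antisym T_def by (simp add: form2_sym[of A])
  finally show ?thesis
    unfolding A_def .
qed

theorem proposition3p13:
  fixes i j :: nat and lam gam :: complex
  shows "(\<forall>X :: 'n::{finite,linorder} sqm \<times> 'n sqm.
            qbr (Pfun i \<circ> phi lam) (Pfun j \<circ> phi gam) X = 0)
       \<and> (\<forall>(K :: 'n sqm \<times> 'n sqm \<Rightarrow> complex) (x :: 'n sqm) (y :: 'n sqm).
            (\<exists>G. has_grad K G (x, y)) \<longrightarrow>
            qbr K (Pfun i \<circ> phi lam) (x, y)
              = form2 (- pcomm (x, y)
                          (Rop (mpow (lam *c x - y) (i + 1)) - mpow (lam *c x - y) (i + 1),
                           Rop (mpow (lam *c x - y) (i + 1)) + mpow (lam *c x - y) (i + 1)))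
                      (grad K (x, y)))"
proof (intro conjI allI impI)
  fix X :: "'n sqm \<times> 'n sqm"
  show "qbr (Pfun i \<circ> phi lam) (Pfun j \<circ> phi gam) X = 0"
    by (rule Pfun_phi_involutive)
next
  fix K :: "'n sqm \<times> 'n sqm \<Rightarrow> complex" and x y :: "'n sqm"
  show "qbr K (Pfun i \<circ> phi lam) (x, y)
      = form2 (- pcomm (x, y)
                  (Rop (mpow (lam *c x - y) (i + 1)) - mpow (lam *c x - y) (i + 1),
                   Rop (mpow (lam *c x - y) (i + 1)) + mpow (lam *c x - y) (i + 1)))
              (grad K (x, y))"
    by (rule hamiltonian_vector_field_Pfun_phi)
qed

end
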